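(* Let $A$ be a pre-Lie commutative algebra, with operations $\circ$ and $\cdot$. Then $A$, equipped with the product $\circ$ and the bracket $[a_1,a_2]=a_1\cdot a_2-a_2\cdot a_1$, is an $F$-manifold algebra: $\circ$ is commutative and associative, $[-,-]$ is skew-symmetric and satisfies the Jacobi identity, and the Hertling--Manin relation $P_{a_1\circ a_2}(a_3,a_4)=a_1\circ P_{a_2}(a_3,a_4)+a_2\circ P_{a_1}(a_3,a_4)$ holds for all $a_1,a_2,a_3,a_4\in A$, where $P_{a_1}(a_2,a_3)=[a_1,a_2\circ a_3]-[a_1,a_2]\circ a_3-a_2\circ[a_1,a_3]$.
   Context: Work over a field of characteristic zero (with the Koszul sign rule if the algebra is graded; the identities are written here for even elements). A pre-Lie commutative algebra is a vector space $A$ with a commutative binary operation $\circ$ and a binary operation $\cdot$ (no symmetry) satisfying $(a_1\circ a_2)\circ a_3=a_1\circ(a_2\circ a_3)$, $(a_1\cdot a_2)\cdot a_3 - a_1\cdot (a_2\cdot a_3) = (a_1\cdot a_3)\cdot a_2- a_1\cdot (a_3\cdot a_2)$, $(a_1\circ a_2)\cdot a_3=(a_1\cdot a_3)\circ a_2 + a_1\circ (a_2\cdot a_3)$, for all $a_1,a_2,a_3\in A$. *)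

theory Defs
  imports Main
begin

definition vector_space_over :: "('k::field_char_0 \<Rightarrow> 'v::ab_group_add \<Rightarrow> 'v) \<Rightarrow> bool" where
  "vector_space_over sm \<longleftrightarrow>
     (\<forall>a x y. sm a (x + y) = sm a x + sm a y) \<and>
     (\<forall>a b x. sm (a + b) x = sm a x + sm b x) \<and>
     (\<forall>a b x. sm a (sm b x) = sm (a * b) x) \<and>
     (\<forall>x. sm 1 x = x)"

definition bilinear_op :: "('k::field_char_0 \<Rightarrow> 'v::ab_group_add \<Rightarrow> 'v) \<Rightarrow> ('v \<Rightarrow> 'v \<Rightarrow> 'v) \<Rightarrow> bool" where
  "bilinear_op sm m \<longleftrightarrow>
     (\<forall>x y z. m (x + y) z = m x z + m y z) \<and>
     (\<forall>x y z. m x (y + z) = m x y + m x z) \<and>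
     (\<forall>a x y. m (sm a x) y = sm a (m x y)) \<and>
     (\<forall>a x y. m x (sm a y) = sm a (m x y))"

definition pre_Lie_commutative_algebra ::
  "('k::field_char_0 \<Rightarrow> 'v::ab_group_add \<Rightarrow> 'v) \<Rightarrow> ('v \<Rightarrow> 'v \<Rightarrow> 'v) \<Rightarrow> ('v \<Rightarrow> 'v \<Rightarrow> 'v) \<Rightarrow> bool" where
  "pre_Lie_commutative_algebra sm circ dot \<longleftrightarrow>
     vector_space_over sm \<and> bilinear_op sm circ \<and> bilinear_op sm dot \<and>
     (\<forall>a b. circ a b = circ b a) \<and>
     (\<forall>a1 a2 a3. circ (circ a1 a2) a3 = circ a1 (circ a2 a3)) \<and>
     (\<forall>a1 a2 a3. dot (dot a1 a2) a3 - dot a1 (dot a2 a3) = dot (dot a1 a3) a2 - dot a1 (dot a3 a2)) \<and>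
     (\<forall>a1 a2 a3. dot (circ a1 a2) a3 = circ (dot a1 a3) a2 + circ a1 (dot a2 a3))"

definition Pmap :: "('v \<Rightarrow> 'v \<Rightarrow> 'v) \<Rightarrow> ('v::ab_group_add \<Rightarrow> 'v \<Rightarrow> 'v) \<Rightarrow> 'v \<Rightarrow> 'v \<Rightarrow> 'v \<Rightarrow> 'v" where
  "Pmap circ br a1 a2 a3 = br a1 (circ a2 a3) - circ (br a1 a2) a3 - circ a2 (br a1 a3)"

definition F_manifold_algebra ::
  "('k::field_char_0 \<Rightarrow> 'v::ab_group_add \<Rightarrow> 'v) \<Rightarrow> ('v \<Rightarrow> 'v \<Rightarrow> 'v) \<Rightarrow> ('v \<Rightarrow> 'v \<Rightarrow> 'v) \<Rightarrow> bool" where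
  "F_manifold_algebra sm circ br \<longleftrightarrow>
     vector_space_over sm \<and> bilinear_op sm circ \<and> bilinear_op sm br \<and>
     (\<forall>a b. circ a b = circ b a) \<and>
     (\<forall>a1 a2 a3. circ (circ a1 a2) a3 = circ a1 (circ a2 a3)) \<and>
     (\<forall>a b. br a b = - br b a) \<and>
     (\<forall>a1 a2 a3. br a1 (br a2 a3) + br a2 (br a3 a1) + br a3 (br a1 a2) = 0) \<and>
     (\<forall>a1 a2 a3 a4. Pmap circ br (circ a1 a2) a3 a4 =
          circ a1 (Pmap circ br a2 a3 a4) + circ a2 (Pmap circ br a1 a3 a4))"

end

theory Submission
  imports Defs "HOL.Modules"
begin

text \<open>The compatibility law says that each right multiplication \<open>x \<mapsto> x \<cdot> c\<close> is a
derivation of \<open>\<circ>\<close>. Hence the commutator terms \<open>(b \<circ> c) \<cdot> a\<close> cancel in \<open>P\<^sub>a(b, c)\<close>, which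
reduces to the failure of the left multiplication \<open>L\<^sub>a = a \<cdot> -\<close> to be a derivation. Read with its
first argument as variable, the same law gives \<open>L\<^bsub>a\<^sub>1 \<circ> a\<^sub>2\<^esub> = a\<^sub>2 \<circ> L\<^bsub>a\<^sub>1\<^esub> + a\<^sub>1 \<circ> L\<^bsub>a\<^sub>2\<^esub>\<close>, from which
the Hertling--Manin relation follows using only that \<open>\<circ>\<close> is commutative and associative.
The Jacobi identity is the classical fact that the commutator of a right-symmetric
product is a Lie bracket.\<close>

definition leibniz_defect :: "('v \<Rightarrow> 'v \<Rightarrow> 'v) \<Rightarrow> ('v::ab_group_add \<Rightarrow> 'v \<Rightarrow> 'v) \<Rightarrow> 'v \<Rightarrow> 'v \<Rightarrow> 'v \<Rightarrow> 'v"
  where "leibniz_defect circ dot a b c = dot a (circ b c) - circ (dot a b) c - circ b (dot a c)"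

lemma biadditive_diff:
  fixes m :: "'a::ab_group_add \<Rightarrow> 'a \<Rightarrow> 'b::ab_group_add"
  assumes "\<And>x y z. m (x + y) z = m x z + m y z" and "\<And>x y z. m x (y + z) = m x y + m x z"
  shows "m (x - y) z = m x z - m y z" and "m z (x - y) = m z x - m z y"
  using additive.diff[OF additive.intro, of "\<lambda>x. m x z"]
    additive.diff[OF additive.intro, of "m z"] assms by blast+

lemma bilinear_op_commutator:
  assumes "vector_space_over sm" and "bilinear_op sm dot"
  shows "bilinear_op sm (\<lambda>a b. dot a b - dot b a)"
proof -
  have sm_diff: "sm k (u - v) = sm k u - sm k v" for k u v
    using assms(1) by (simp add: vector_space_over_def additive.diff[OF additive.intro])
  show ?thesis
    using assms(2) by (simp add: bilinear_op_def sm_diff algebra_simps)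
qed

lemma commutator_jacobi:
  fixes dot :: "'v::ab_group_add \<Rightarrow> 'v \<Rightarrow> 'v"
  assumes add_left: "\<And>x y z. dot (x + y) z = dot x z + dot y z"
    and add_right: "\<And>x y z. dot x (y + z) = dot x y + dot x z"
    and right_symmetric: "\<And>a b c. dot (dot a b) c - dot a (dot b c) = dot (dot a c) b - dot a (dot c b)"
  defines "br \<equiv> \<lambda>a b. dot a b - dot b a"
  shows "br a (br b c) + br b (br c a) + br c (br a b) = 0"
proof -
  have rearranged:
       "dot (dot a c) b = dot a (dot c b) - dot a (dot b c) + dot (dot a b) c"
       "dot (dot b a) c = dot b (dot a c) - dot b (dot c a) + dot (dot b c) a"
       "dot (dot c b) a = dot c (dot b a) - dot c (dot a b) + dot (dot c a) b"
    using right_symmetric[of a b c] right_symmetric[of b c a] right_symmetric[of c a b]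
    by (simp_all add: algebra_simps)
  show ?thesis
    by (simp add: br_def biadditive_diff[OF add_left add_right] rearranged algebra_simps)
qed

lemma Pmap_commutator_eq_leibniz_defect:
  fixes circ dot :: "'v::ab_group_add \<Rightarrow> 'v \<Rightarrow> 'v"
  assumes add_left: "\<And>x y z. dot (x + y) z = dot x z + dot y z"
    and add_right: "\<And>x y z. dot x (y + z) = dot x y + dot x z"
    and circ_add_left: "\<And>x y z. circ (x + y) z = circ x z + circ y z"
    and circ_add_right: "\<And>x y z. circ x (y + z) = circ x y + circ x z"
    and compatible: "\<And>a b c. dot (circ a b) c = circ (dot a c) b + circ a (dot b c)"
  shows "Pmap circ (\<lambda>a b. dot a b - dot b a) a b c = leibniz_defect circ dot a b c"
  by (simp add: Pmap_def leibniz_defect_def compatible biadditive_diff[OF add_left add_right]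
      biadditive_diff[OF circ_add_left circ_add_right] algebra_simps)

lemma leibniz_defect_circ:
  fixes circ dot :: "'v::ab_group_add \<Rightarrow> 'v \<Rightarrow> 'v"
  assumes circ_add_right: "\<And>x y z. circ x (y + z) = circ x y + circ x z"
    and commute: "\<And>a b. circ a b = circ b a"
    and assoc: "\<And>a b c. circ (circ a b) c = circ a (circ b c)"
    and compatible: "\<And>a b c. dot (circ a b) c = circ (dot a c) b + circ a (dot b c)"
  shows "leibniz_defect circ dot (circ a1 a2) b c =
    circ a1 (leibniz_defect circ dot a2 b c) + circ a2 (leibniz_defect circ dot a1 b c)"
proof -
  have circ_diff: "circ z (x - y) = circ z x - circ z y" for x y z
    using additive.diff[OF additive.intro, of "circ z"] circ_add_right by blast
  have left_comm: "circ x (circ y z) = circ y (circ x z)" for x y z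
    by (metis assoc commute)
  have mult_split: "dot (circ a1 a2) x = circ a2 (dot a1 x) + circ a1 (dot a2 x)" for x
    using compatible commute by metis
  show ?thesis
    by (simp add: leibniz_defect_def mult_split circ_diff circ_add_right assoc left_comm
        commute[of _ c] algebra_simps)
qed

theorem proposition12:
  fixes sm :: "'k::field_char_0 \<Rightarrow> 'v::ab_group_add \<Rightarrow> 'v"
    and circ dot :: "'v \<Rightarrow> 'v \<Rightarrow> 'v"
  assumes "pre_Lie_commutative_algebra sm circ dot"
  shows "F_manifold_algebra sm circ (\<lambda>a1 a2. dot a1 a2 - dot a2 a1)"
proof -
  note pre_Lie = assms[unfolded pre_Lie_commutative_algebra_def]
  have circ: "bilinear_op sm circ" and dot: "bilinear_op sm dot"
    and commute: "\<And>a b. circ a b = circ b a"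
    and assoc: "\<And>a b c. circ (circ a b) c = circ a (circ b c)"
    and right_symmetric:
      "\<And>a b c. dot (dot a b) c - dot a (dot b c) = dot (dot a c) b - dot a (dot c b)"
    and compatible: "\<And>a b c. dot (circ a b) c = circ (dot a c) b + circ a (dot b c)"
    using pre_Lie by meson+
  from circ dot have additivity:
    "\<And>x y z. circ (x + y) z = circ x z + circ y z" "\<And>x y z. circ x (y + z) = circ x y + circ x z"
    "\<And>x y z. dot (x + y) z = dot x z + dot y z" "\<And>x y z. dot x (y + z) = dot x y + dot x z"
    unfolding bilinear_op_def by simp_all
  have P: "Pmap circ (\<lambda>a b. dot a b - dot b a) a b c = leibniz_defect circ dot a b c" for a b c
    using Pmap_commutator_eq_leibniz_defect[where circ = circ and dot = dot,
        OF additivity(3,4,1,2) compatible] .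
  show ?thesis
    unfolding F_manifold_algebra_def P
    using pre_Lie bilinear_op_commutator[where sm = sm and dot = dot]
      commutator_jacobi[where dot = dot, OF additivity(3,4) right_symmetric]
      leibniz_defect_circ[where circ = circ and dot = dot, OF additivity(2) commute assoc compatible]
    by auto
qed

end
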